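(* Let $n\ge1$, let $X$ be a discrete random variable with exactly $K\ge1$ mass points in $[0,1]$, let $P_Y$ be its output distribution through the binomial channel with $n$ trials, and let $P_{Y_r}$ be the Beta-binomial reference output. Suppose $\chi^2(P_Y\|P_{Y_r})\le u_n$ for some $u_n\in(0,1/4)$, and set $\alpha_n:=\log\frac{1}{4u_n}$. Then at least one of the following holds: \[ K>\frac{n+2}{4}\qquad\text{or}\qquad K\ge\frac{4-\alpha_n+\sqrt{\alpha_n(4n+\alpha_n+4)}}{8}. \] Consequently, if for a sequence of such situations (indexed by $n$) one has $\alpha_n\to\infty$, then $K/\sqrt n\to\infty$; and if moreover $\alpha_n=o(n)$, then $K\ge \frac14\sqrt{n\alpha_n}\,(1+o(1))=\frac14\sqrt{n\log\frac{1}{4u_n}}\,(1+o(1))$.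
   Context: All logarithms are natural. For an integer $n\ge1$, the binomial channel has input $X\in[0,1]$, output $Y\in\{0,\dots,n\}$ and transition law $P_{Y|X}(y|x)=\binom{n}{y}x^y(1-x)^{n-y}$. The reference input is $X_r\sim\mathrm{Beta}(1/2,1/2)$ with induced Beta-binomial output $P_{Y_r}(y)=\frac{\Gamma(y+1/2)\Gamma(n-y+1/2)}{\pi\,\Gamma(y+1)\Gamma(n-y+1)}$, $y=0,\dots,n$. $\chi^2(P\|Q)=\sum_y \frac{(P(y)-Q(y))^2}{Q(y)}$. *)

theory Defs
  imports "HOL-Analysis.Analysis" "HOL-Library.Landau_Symbols"
begin

definition discrete_input :: "real set \<Rightarrow> (real \<Rightarrow> real) \<Rightarrow> nat \<Rightarrow> bool" where
  "discrete_input S w K \<longleftrightarrow> finite S \<and> S \<subseteq> {0..1} \<and> card S = K \<and>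
     (\<forall>x\<in>S. w x > 0) \<and> (\<Sum>x\<in>S. w x) = 1"

definition binom_out :: "nat \<Rightarrow> real set \<Rightarrow> (real \<Rightarrow> real) \<Rightarrow> nat \<Rightarrow> real" where
  "binom_out n S w y = (\<Sum>x\<in>S. w x * (real (n choose y) * x ^ y * (1 - x) ^ (n - y)))"

text \<open>Beta-binomial reference output (input Beta(1/2,1/2)).\<close>
definition ref_out :: "nat \<Rightarrow> nat \<Rightarrow> real" where
  "ref_out n y = Gamma (real y + 1/2) * Gamma (real (n - y) + 1/2) /
                 (pi * Gamma (real y + 1) * Gamma (real (n - y) + 1))"

definition chi2 :: "nat \<Rightarrow> (nat \<Rightarrow> real) \<Rightarrow> (nat \<Rightarrow> real) \<Rightarrow> real" where
  "chi2 n P Q = (\<Sum>y\<in>{0..n}. (P y - Q y)^2 / Q y)"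

end

theory Submission
  imports Defs
begin

text \<open>Write \<nu> for the arcsine law Beta(1/2, 1/2) of X_r and C_k(x) = T_k(1 - 2x) for the shifted
  Chebyshev polynomials, which are orthogonal in L2(\<nu>). The operator taking h to
  x \<mapsto> E[E[h(X_r) | Y_r = Y]], Y \<sim> Bin(n, x), is self-adjoint in L2(\<nu>) and does not raise degrees,
  so C_k is an eigenfunction, with eigenvalue \<lambda>_k = prod_{i<k} (n - i)/(n + i + 1). Testing \<chi>^2 by
  Cauchy-Schwarz against y \<mapsto> E[h(X_r) | Y_r = y] for h = sum_{k=1..D} m_k C_k, where m_k = E C_k(X)
  are the Chebyshev moments of the input, gives \<chi>^2 \<ge> 2 sum_{k=1..D} \<lambda>_k m_k^2. If X has K atoms,
  then m_k = E cos(k \<theta>) for an angle \<theta> taking K values, and two estimates of the Frobenius norm of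
  the Toeplitz matrix (m_|a-b|)_{a,b<4K-1} show sum_{k=1..4K-2} m_k^2 \<ge> 1/4. Hence, with D = 4K - 2,
  \<chi>^2 \<ge> \<lambda>_D/2 \<ge> exp(-D^2/(n - D + 1))/2; solving for K gives the bound, and the asymptotic
  statements follow by elementary estimates.\<close>

section \<open>The arcsine law\<close>

definition haversine :: "real \<Rightarrow> real" where
  "haversine t = (1 - cos t) / 2"

text \<open>The reference input \<open>X\<^sub>r \<sim> Beta(1/2, 1/2)\<close> is distributed as the haversine of an angle
  uniform on \<open>[0, \<pi>]\<close>, so expectations under it are integrals over \<open>[0, \<pi>]\<close>.\<close>
definition arcsine_mean :: "(real \<Rightarrow> real) \<Rightarrow> real" where
  "arcsine_mean g = integral {0..pi} (\<lambda>t. g (haversine t)) / pi"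

lemma haversine_nonneg: "0 \<le> haversine t"
  and haversine_le_one: "haversine t \<le> 1"
  unfolding haversine_def using cos_ge_minus_one[of t] cos_le_one[of t] by auto

lemma one_minus_2_haversine: "1 - 2 * haversine t = cos t"
  unfolding haversine_def by (simp add: field_simps)

lemma haversine_eq_sin_sq: "haversine t = sin (t / 2) ^ 2"
  using cos_double_sin[of "t / 2"] unfolding haversine_def by simp

lemma one_minus_haversine: "1 - haversine t = cos (t / 2) ^ 2"
  unfolding haversine_eq_sin_sq using sin_cos_squared_add[of "t / 2"] by linarith

lemma haversine_arccos: "0 \<le> x \<Longrightarrow> x \<le> 1 \<Longrightarrow> haversine (arccos (1 - 2 * x)) = x"
  unfolding haversine_def by simp

lemma continuous_on_haversine_comp:
  "continuous_on UNIV g \<Longrightarrow> continuous_on {0..pi} (\<lambda>t. g (haversine t))"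
  unfolding haversine_def by (rule continuous_on_compose2[of UNIV g]) (auto intro!: continuous_intros)

lemma integrable_haversine_comp:
  fixes g :: "real \<Rightarrow> real"
  assumes "continuous_on UNIV g" shows "(\<lambda>t. g (haversine t)) integrable_on {0..pi}"
  using continuous_on_haversine_comp[OF assms] by (rule integrable_continuous_interval)

lemma arcsine_mean_add:
  "continuous_on UNIV f \<Longrightarrow> continuous_on UNIV g \<Longrightarrow>
     arcsine_mean (\<lambda>x. f x + g x) = arcsine_mean f + arcsine_mean g"
  unfolding arcsine_mean_def by (simp add: integral_add integrable_haversine_comp add_divide_distrib)

lemma arcsine_mean_diff:
  "continuous_on UNIV f \<Longrightarrow> continuous_on UNIV g \<Longrightarrow>
     arcsine_mean (\<lambda>x. f x - g x) = arcsine_mean f - arcsine_mean g"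
  unfolding arcsine_mean_def by (simp add: integral_diff integrable_haversine_comp diff_divide_distrib)

lemma arcsine_mean_cmult: "arcsine_mean (\<lambda>x. c * f x) = c * arcsine_mean f"
  unfolding arcsine_mean_def by simp

lemma arcsine_mean_sum:
  "finite A \<Longrightarrow> (\<And>i. i \<in> A \<Longrightarrow> continuous_on UNIV (f i)) \<Longrightarrow>
     arcsine_mean (\<lambda>x. \<Sum>i\<in>A. f i x) = (\<Sum>i\<in>A. arcsine_mean (f i))"
  unfolding arcsine_mean_def by (simp add: integral_sum integrable_haversine_comp flip: sum_divide_distrib)

lemma arcsine_mean_cong:
  "(\<And>x. 0 \<le> x \<Longrightarrow> x \<le> 1 \<Longrightarrow> f x = g x) \<Longrightarrow> arcsine_mean f = arcsine_mean g"
  unfolding arcsine_mean_def using haversine_nonneg haversine_le_one by simp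

lemma arcsine_mean_const [simp]: "arcsine_mean (\<lambda>x. c) = c"
  unfolding arcsine_mean_def by simp

lemma arcsine_mean_square_eq_0_imp:
  assumes "continuous_on UNIV d" "arcsine_mean (\<lambda>x. d x * d x) = 0" "0 \<le> x" "x \<le> 1"
  shows "d x = 0"
proof -
  have "integral {0..pi} (\<lambda>t. d (haversine t) * d (haversine t)) = 0"
    using assms(2) unfolding arcsine_mean_def by simp
  moreover have "continuous_on {0..pi} (\<lambda>t. d (haversine t) * d (haversine t))"
    using continuous_on_haversine_comp[OF assms(1)] by (intro continuous_on_mult)
  ultimately have "\<forall>t\<in>{0..pi}. d (haversine t) * d (haversine t) = 0"
    using integral_eq_0_iff[of 0 pi "\<lambda>t. d (haversine t) * d (haversine t)"] by simp
  moreover have "arccos (1 - 2 * x) \<in> {0..pi}"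
    using assms(3,4) by (simp add: arccos_lbound arccos_ubound)
  ultimately show ?thesis using haversine_arccos[OF assms(3,4)] by (metis mult_eq_0_iff)
qed

section \<open>Polynomial functions of bounded degree\<close>

definition low_degree :: "nat \<Rightarrow> (real \<Rightarrow> real) \<Rightarrow> bool" where
  "low_degree j p \<longleftrightarrow> (\<exists>c. \<forall>x. p x = (\<Sum>i<j. c i * x ^ i))"

lemma low_degree_zero: "low_degree j (\<lambda>x. 0)"
  unfolding low_degree_def by (rule exI[of _ "\<lambda>i. 0"]) simp

lemma low_degree_0_eq_0: "low_degree 0 p \<Longrightarrow> p x = 0"
  unfolding low_degree_def by auto

lemma low_degree_add: "low_degree j p \<Longrightarrow> low_degree j q \<Longrightarrow> low_degree j (\<lambda>x. p x + q x)"
  unfolding low_degree_def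
proof (elim exE)
  fix c d assume "\<forall>x. p x = (\<Sum>i<j. c i * x ^ i)" "\<forall>x. q x = (\<Sum>i<j. d i * x ^ i)"
  then show "\<exists>e. \<forall>x. p x + q x = (\<Sum>i<j. e i * x ^ i)"
    by (intro exI[of _ "\<lambda>i. c i + d i"]) (simp add: sum.distrib distrib_right)
qed

lemma low_degree_cmult: "low_degree j p \<Longrightarrow> low_degree j (\<lambda>x. a * p x)"
  unfolding low_degree_def
proof (elim exE)
  fix c assume "\<forall>x. p x = (\<Sum>i<j. c i * x ^ i)"
  then show "\<exists>e. \<forall>x. a * p x = (\<Sum>i<j. e i * x ^ i)"
    by (intro exI[of _ "\<lambda>i. a * c i"]) (simp add: sum_distrib_left mult.assoc)
qed

lemma low_degree_diff: "low_degree j p \<Longrightarrow> low_degree j q \<Longrightarrow> low_degree j (\<lambda>x. p x - q x)"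
  using low_degree_add[of j p "\<lambda>x. - 1 * q x"] low_degree_cmult[of j q "- 1"] by simp

lemma low_degree_sum:
  "finite A \<Longrightarrow> (\<And>i. i \<in> A \<Longrightarrow> low_degree j (f i)) \<Longrightarrow> low_degree j (\<lambda>x. \<Sum>i\<in>A. f i x)"
  by (induction A rule: finite_induct) (simp_all add: low_degree_zero low_degree_add)

lemma low_degree_mono: "j \<le> k \<Longrightarrow> low_degree j p \<Longrightarrow> low_degree k p"
  unfolding low_degree_def
proof (elim exE)
  fix c assume jk: "j \<le> k" and c: "\<forall>x. p x = (\<Sum>i<j. c i * x ^ i)"
  have "(\<Sum>i<k. (if i < j then c i else 0) * x ^ i) = (\<Sum>i<j. c i * x ^ i)" for x
  proof -
    have "(\<Sum>i<k. (if i < j then c i else 0) * x ^ i) = (\<Sum>i\<in>{..<k} \<inter> {i. i < j}. c i * x ^ i)"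
      by (simp add: sum.inter_restrict) (rule sum.cong, auto)
    also have "{..<k} \<inter> {i. i < j} = {..<j}" using jk by auto
    finally show ?thesis .
  qed
  then show "\<exists>e. \<forall>x. p x = (\<Sum>i<k. e i * x ^ i)"
    using c by (intro exI[of _ "\<lambda>i. if i < j then c i else 0"]) simp
qed

lemma low_degree_mult_x: "low_degree j p \<Longrightarrow> low_degree (Suc j) (\<lambda>x. x * p x)"
  unfolding low_degree_def
proof (elim exE)
  fix c assume c: "\<forall>x. p x = (\<Sum>i<j. c i * x ^ i)"
  have "x * p x = (\<Sum>i<Suc j. (if i = 0 then 0 else c (i - 1)) * x ^ i)" for x
  proof -
    have "(\<Sum>i<Suc j. (if i = 0 then 0 else c (i - 1)) * x ^ i) = (\<Sum>i<j. c i * x ^ Suc i)"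
      by (subst sum.lessThan_Suc_shift) simp
    also have "\<dots> = x * p x" by (simp add: c sum_distrib_left mult_ac)
    finally show ?thesis by simp
  qed
  then show "\<exists>e. \<forall>x. x * p x = (\<Sum>i<Suc j. e i * x ^ i)"
    by (intro exI[of _ "\<lambda>i. if i = 0 then 0 else c (i - 1)"] allI)
qed

lemma low_degree_mult_linear:
  assumes "low_degree j p" shows "low_degree (Suc j) (\<lambda>x. (b * x + c) * p x)"
proof -
  have "low_degree (Suc j) (\<lambda>x. b * (x * p x) + c * p x)"
    by (rule low_degree_add[OF low_degree_cmult[OF low_degree_mult_x[OF assms]]
          low_degree_cmult[OF low_degree_mono[OF _ assms]]]) simp
  then show ?thesis by (simp add: algebra_simps)
qed

lemma low_degree_power: "i < j \<Longrightarrow> low_degree j (\<lambda>x. x ^ i)"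
  unfolding low_degree_def
proof (intro exI allI)
  fix x :: real assume "i < j"
  have "(\<Sum>m<j. (if m = i then 1 else 0) * x ^ m) = (\<Sum>m<j. if m = i then x ^ m else 0)"
    by (rule sum.cong) auto
  then show "x ^ i = (\<Sum>m<j. (if m = i then 1 else 0) * x ^ m)" using \<open>i < j\<close> by simp
qed

lemma low_degree_const: "0 < j \<Longrightarrow> low_degree j (\<lambda>x. a)"
  using low_degree_cmult[OF low_degree_power[of 0 j], of a] by simp

lemma continuous_on_low_degree: "low_degree j p \<Longrightarrow> continuous_on UNIV p"
  unfolding low_degree_def
proof (elim exE)
  fix c assume "\<forall>x. p x = (\<Sum>i<j. c i * x ^ i)"
  then have "p = (\<lambda>x. \<Sum>i<j. c i * x ^ i)" by auto
  then show ?thesis by (simp add: continuous_intros)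
qed

lemma low_degree_Suc_obtain_leading: "low_degree (Suc j) p \<Longrightarrow> \<exists>a. low_degree j (\<lambda>x. p x - a * x ^ j)"
  unfolding low_degree_def
proof (elim exE)
  fix c assume "\<forall>x. p x = (\<Sum>i<Suc j. c i * x ^ i)"
  then have "\<forall>x. p x - c j * x ^ j = (\<Sum>i<j. c i * x ^ i)" by simp
  then show "\<exists>a c. \<forall>x. p x - a * x ^ j = (\<Sum>i<j. c i * x ^ i)" by blast
qed

lemma low_degree_SucI:
  assumes "low_degree j (\<lambda>x. p x - a * x ^ j)" shows "low_degree (Suc j) p"
proof -
  have "low_degree (Suc j) (\<lambda>x. (p x - a * x ^ j) + a * x ^ j)"
    by (rule low_degree_add[OF low_degree_mono[OF _ assms]]) (auto intro: low_degree_cmult low_degree_power)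
  then show ?thesis by simp
qed

section \<open>Shifted Chebyshev polynomials\<close>

fun chebyshev_T :: "nat \<Rightarrow> real \<Rightarrow> real" where
  "chebyshev_T 0 u = 1"
| "chebyshev_T (Suc 0) u = u"
| "chebyshev_T (Suc (Suc k)) u = 2 * u * chebyshev_T (Suc k) u - chebyshev_T k u"

lemma chebyshev_T_cos: "chebyshev_T k (cos t) = cos (real k * t)"
proof (induction k rule: induct_nat_012)
  case (ge2 k)
  have "cos (real (Suc (Suc k)) * t) = cos (real (Suc k) * t + t)"
    and "cos (real k * t) = cos (real (Suc k) * t - t)" by (simp_all add: algebra_simps)
  then show ?case using ge2 by (simp only: chebyshev_T.simps cos_add cos_diff) (simp add: algebra_simps)
qed simp_all

definition shifted_chebyshev :: "nat \<Rightarrow> real \<Rightarrow> real" where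
  "shifted_chebyshev k x = chebyshev_T k (1 - 2 * x)"

lemma shifted_chebyshev_haversine: "shifted_chebyshev k (haversine t) = cos (real k * t)"
  unfolding shifted_chebyshev_def one_minus_2_haversine by (rule chebyshev_T_cos)

lemma shifted_chebyshev_arccos:
  "0 \<le> x \<Longrightarrow> x \<le> 1 \<Longrightarrow> shifted_chebyshev k x = cos (real k * arccos (1 - 2 * x))"
  unfolding shifted_chebyshev_def using chebyshev_T_cos[of k "arccos (1 - 2 * x)"] by simp

lemma low_degree_shifted_chebyshev: "low_degree (Suc k) (shifted_chebyshev k)"
  unfolding shifted_chebyshev_def
proof (induction k rule: induct_nat_012)
  case 0
  then show ?case by (simp add: low_degree_const)
next
  case 1
  show ?case
    using low_degree_mult_linear[OF low_degree_const[of 1 1], of "-2" 1] by simp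
next
  case (ge2 k)
  have "low_degree (Suc (Suc (Suc k))) (\<lambda>x. ((-4) * x + 2) * chebyshev_T (Suc k) (1 - 2 * x))"
    by (rule low_degree_mult_linear) (use ge2 in simp)
  moreover have "low_degree (Suc (Suc (Suc k))) (\<lambda>x. chebyshev_T k (1 - 2 * x))"
    by (rule low_degree_mono[OF _ ge2(1)]) simp
  ultimately show ?case by (auto dest: low_degree_diff simp: algebra_simps)
qed

lemma continuous_on_shifted_chebyshev: "continuous_on UNIV (shifted_chebyshev k)"
  by (rule continuous_on_low_degree[OF low_degree_shifted_chebyshev])

lemma has_integral_cos_nat_mult:
  assumes "k \<ge> 1" shows "((\<lambda>t. cos (real k * t)) has_integral 0) {0..pi}"
proof -
  have "((\<lambda>t. cos (real k * t)) has_integral (sin (real k * pi) / real k - sin (real k * 0) / real k)) {0..pi}"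
  proof (rule fundamental_theorem_of_calculus)
    fix t :: real
    have "((\<lambda>t. sin (real k * t) / real k) has_real_derivative cos (real k * t)) (at t within {0..pi})"
      using assms by (auto intro!: derivative_eq_intros)
    then show "((\<lambda>t. sin (real k * t) / real k) has_vector_derivative cos (real k * t)) (at t within {0..pi})"
      by (simp add: has_real_derivative_iff_has_vector_derivative)
  qed simp
  then show ?thesis by simp
qed

lemma integral_cos_nat_mult_haversine_power:
  "i < k \<Longrightarrow> integral {0..pi} (\<lambda>t. cos (real k * t) * haversine t ^ i) = 0"
proof (induction i arbitrary: k)
  case 0
  then show ?case using has_integral_cos_nat_mult[of k] by (simp add: integral_unique)
next
  case (Suc i)
  then obtain m where k: "k = Suc m" by (cases k) auto
  define F where "F j t = cos (real j * t) * haversine t ^ i" for j t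
  have split: "cos (real k * t) * haversine t ^ Suc i = (1/2) * F k t - (1/4) * F (Suc k) t - (1/4) * F m t" for t
  proof -
    have a: "cos (real (Suc k) * t) = cos (real k * t + t)" by (simp add: algebra_simps)
    have b: "cos (real m * t) = cos (real k * t - t)" using k by (simp add: algebra_simps)
    show ?thesis unfolding F_def a b cos_add cos_diff haversine_def power_Suc by (simp add: field_simps)
  qed
  have int: "(\<lambda>t. c * F j t) integrable_on {0..pi}" for j c
    unfolding F_def haversine_def by (rule integrable_continuous_interval) (auto intro!: continuous_intros)
  have "integral {0..pi} (F k) = 0" "integral {0..pi} (F (Suc k)) = 0" "integral {0..pi} (F m) = 0"
    using Suc.IH[of k] Suc.IH[of "Suc k"] Suc.IH[of m] Suc.prems k unfolding F_def by simp_all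
  moreover have "integral {0..pi} (\<lambda>t. (1/2) * F k t - (1/4) * F (Suc k) t - (1/4) * F m t)
      = integral {0..pi} (\<lambda>t. (1/2) * F k t) - integral {0..pi} (\<lambda>t. (1/4) * F (Suc k) t)
        - integral {0..pi} (\<lambda>t. (1/4) * F m t)"
    by (simp only: integral_diff int integrable_diff)
  ultimately show ?case unfolding split by simp
qed

lemma integral_cos_nat_mult_sq:
  assumes "k \<ge> 1" shows "integral {0..pi} (\<lambda>t. cos (real k * t) * cos (real k * t)) = pi / 2"
proof -
  have sq: "cos (real k * t) * cos (real k * t) = 1/2 + (1/2) * cos (real (2*k) * t)" for t
    using cos_double_cos[of "real k * t"] by (simp add: algebra_simps power2_eq_square)
  have "((\<lambda>t. 1/2) has_integral pi / 2) {0..pi}"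
    using has_integral_const_real[of "1/2::real" 0 pi] by simp
  then have "((\<lambda>t. 1/2 + (1/2) * cos (real (2*k) * t)) has_integral (pi / 2 + (1/2) * 0)) {0..pi}"
    using assms by (intro has_integral_add has_integral_mult_right has_integral_cos_nat_mult) auto
  then show ?thesis unfolding sq by (simp add: integral_unique)
qed

lemma arcsine_mean_low_degree_mult_shifted_chebyshev:
  assumes "low_degree k r" shows "arcsine_mean (\<lambda>x. r x * shifted_chebyshev k x) = 0"
proof -
  obtain c where c: "\<And>x. r x = (\<Sum>i<k. c i * x ^ i)" using assms unfolding low_degree_def by blast
  have "arcsine_mean (\<lambda>x. r x * shifted_chebyshev k x) =
      (\<Sum>i<k. arcsine_mean (\<lambda>x. c i * (x ^ i * shifted_chebyshev k x)))"
    unfolding c sum_distrib_right mult.assoc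
    by (rule arcsine_mean_sum) (auto intro!: continuous_intros continuous_on_shifted_chebyshev)
  also have "\<dots> = 0"
  proof -
    have "arcsine_mean (\<lambda>x. x ^ i * shifted_chebyshev k x) = 0" if "i < k" for i
      using integral_cos_nat_mult_haversine_power[OF that]
      by (simp add: arcsine_mean_def shifted_chebyshev_haversine mult.commute)
    then show ?thesis by (simp add: arcsine_mean_cmult)
  qed
  finally show ?thesis .
qed

lemma arcsine_mean_shifted_chebyshev: "k \<ge> 1 \<Longrightarrow> arcsine_mean (shifted_chebyshev k) = 0"
  using arcsine_mean_low_degree_mult_shifted_chebyshev[OF low_degree_const[of k 1]] by simp

lemma arcsine_mean_shifted_chebyshev_mult:
  "arcsine_mean (\<lambda>x. shifted_chebyshev l x * shifted_chebyshev k x) =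
     (if k \<noteq> l then 0 else if k = 0 then 1 else 1/2)"
proof -
  consider "l < k" | "k < l" | "k = l" by linarith
  then show ?thesis
  proof cases
    case 1
    then show ?thesis
      using arcsine_mean_low_degree_mult_shifted_chebyshev[OF low_degree_mono[OF _ low_degree_shifted_chebyshev]]
      by simp
  next
    case 2
    then show ?thesis
      using arcsine_mean_low_degree_mult_shifted_chebyshev[OF low_degree_mono[OF _ low_degree_shifted_chebyshev]]
      by (simp add: mult.commute)
  next
    case 3
    then show ?thesis
      using integral_cos_nat_mult_sq[of k]
      by (cases "k = 0") (auto simp: arcsine_mean_def shifted_chebyshev_haversine)
  qed
qed

section \<open>Moments of the arcsine law\<close>

lemma has_real_derivative_sin_cos_half_powers:
  "((\<lambda>t. sin (t/2) ^ (2*a+1) * cos (t/2) ^ (2*b+1)) has_real_derivative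
     (2 * real a + 1) / 2 * (haversine t ^ a * (1 - haversine t) ^ Suc b)
     - (2 * real b + 1) / 2 * (haversine t ^ Suc a * (1 - haversine t) ^ b)) (at t)"
proof -
  define s where "s = sin (t/2)"
  define c where "c = cos (t/2)"
  have "((\<lambda>t. sin (t/2) ^ (2*a+1) * cos (t/2) ^ (2*b+1)) has_real_derivative
     (real (2*a+1) * s ^ (2*a) * (c * (1/2)) * c ^ (2*b+1) +
      s ^ (2*a+1) * (real (2*b+1) * c ^ (2*b) * (- s * (1/2))))) (at t)"
    unfolding s_def c_def by (rule derivative_eq_intros refl | simp)+ (simp add: algebra_simps)
  moreover have "real (2*a+1) * s ^ (2*a) * (c * (1/2)) * c ^ (2*b+1) +
      s ^ (2*a+1) * (real (2*b+1) * c ^ (2*b) * (- s * (1/2)))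
    = (2 * real a + 1) / 2 * (s ^ (2*a) * (c ^ (2*b) * (c * c)))
      - (2 * real b + 1) / 2 * (s ^ (2*a) * (s * s) * c ^ (2*b))"
    by (simp add: algebra_simps power_add)
  moreover have "s ^ (2*a) = haversine t ^ a" "s * s = haversine t"
    unfolding s_def haversine_eq_sin_sq by (simp_all add: power_mult power2_eq_square)
  moreover have "c ^ (2*b) = (1 - haversine t) ^ b" "c * c = 1 - haversine t"
    unfolding c_def one_minus_haversine by (simp_all add: power_mult power2_eq_square)
  ultimately show ?thesis by (simp add: ac_simps)
qed

lemma arcsine_mean_monomial_parts:
  "(2 * real a + 1) * arcsine_mean (\<lambda>x. x ^ a * (1 - x) ^ Suc b) =
     (2 * real b + 1) * arcsine_mean (\<lambda>x. x ^ Suc a * (1 - x) ^ b)"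
proof -
  let ?F = "\<lambda>t. sin (t/2) ^ (2*a+1) * cos (t/2) ^ (2*b+1)"
  let ?g = "\<lambda>x. (2 * real a + 1) / 2 * (x ^ a * (1 - x) ^ Suc b)
               - (2 * real b + 1) / 2 * (x ^ Suc a * (1 - x) ^ b)"
  have "((\<lambda>t. ?g (haversine t)) has_integral (?F pi - ?F 0)) {0..pi}"
    using has_real_derivative_sin_cos_half_powers
    by (intro fundamental_theorem_of_calculus)
      (auto simp: has_real_derivative_iff_has_vector_derivative[symmetric] intro: has_field_derivative_at_within)
  then have "arcsine_mean ?g = 0"
    unfolding arcsine_mean_def by (simp add: integral_unique)
  moreover have "arcsine_mean ?g = arcsine_mean (\<lambda>x. (2 * real a + 1) / 2 * (x ^ a * (1 - x) ^ Suc b))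
      - arcsine_mean (\<lambda>x. (2 * real b + 1) / 2 * (x ^ Suc a * (1 - x) ^ b))"
    by (rule arcsine_mean_diff) (auto intro!: continuous_intros)
  ultimately show ?thesis unfolding arcsine_mean_cmult by simp
qed

lemma arcsine_mean_monomial_recurrences:
  defines "M \<equiv> \<lambda>a b. arcsine_mean (\<lambda>x. x ^ a * (1 - x) ^ b)"
  shows "(real a + real b + 1) * M (Suc a) b = (real a + 1/2) * M a b"
    and "(real a + real b + 1) * M a (Suc b) = (real b + 1/2) * M a b"
proof -
  have "M a b = M (Suc a) b + M a (Suc b)"
    unfolding M_def by (subst arcsine_mean_add[symmetric]) (auto intro!: continuous_intros arg_cong[of _ _ arcsine_mean] simp: algebra_simps)
  then show "(real a + real b + 1) * M (Suc a) b = (real a + 1/2) * M a b"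
    and "(real a + real b + 1) * M a (Suc b) = (real b + 1/2) * M a b"
    using arcsine_mean_monomial_parts[of a b] unfolding M_def by (simp_all add: algebra_simps)
qed

lemma Beta_half_recurrences:
  defines "B \<equiv> \<lambda>a b. Beta (real a + 1/2) (real b + 1/2)"
  shows "(real a + real b + 1) * B (Suc a) b = (real a + 1/2) * B a b"
    and "(real a + real b + 1) * B a (Suc b) = (real b + 1/2) * B a b"
proof -
  have not_nonpos_Int: "real m + 1/2 \<notin> \<int>\<^sub>\<le>\<^sub>0" for m
    using nonpos_Ints_nonpos by fastforce
  show "(real a + real b + 1) * B (Suc a) b = (real a + 1/2) * B a b"
    using Beta_plus1_left[OF not_nonpos_Int, of a "real b + 1/2"] unfolding B_def by (simp add: algebra_simps)
  show "(real a + real b + 1) * B a (Suc b) = (real b + 1/2) * B a b"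
    using Beta_plus1_right[OF not_nonpos_Int, of "real a + 1/2" b] unfolding B_def by (simp add: algebra_simps)
qed

lemma arcsine_mean_monomial:
  "arcsine_mean (\<lambda>x. x ^ a * (1 - x) ^ b) = Beta (real a + 1/2) (real b + 1/2) / pi"
proof -
  define M where "M a b = arcsine_mean (\<lambda>x. x ^ a * (1 - x) ^ b)" for a b
  define B where "B a b = Beta (real a + 1/2) (real b + 1/2) / pi" for a b
  have recM: "(real a + real b + 1) * M (Suc a) b = (real a + 1/2) * M a b"
    "(real a + real b + 1) * M a (Suc b) = (real b + 1/2) * M a b" for a b
    unfolding M_def by (rule arcsine_mean_monomial_recurrences)+
  have recB: "(real a + real b + 1) * B (Suc a) b = (real a + 1/2) * B a b"
    "(real a + real b + 1) * B a (Suc b) = (real b + 1/2) * B a b" for a b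
    unfolding B_def using Beta_half_recurrences[of a b] by (metis times_divide_eq_right)+
  have "M 0 b = B 0 b" for b
  proof (induction b)
    case 0
    show ?case by (simp add: M_def B_def Beta_def Gamma_one_half_real)
  next
    case (Suc b)
    have "(real b + 1) * M 0 (Suc b) = (real b + 1) * B 0 (Suc b)"
      using recM(2)[of 0 b] recB(2)[of 0 b] Suc by simp
    then show ?case by simp
  qed
  then have "M a b = B a b"
  proof (induction a arbitrary: b)
    case (Suc a)
    have "(real a + real b + 1) * M (Suc a) b = (real a + real b + 1) * B (Suc a) b"
      using recM(1)[of a b] recB(1)[of a b] Suc by simp
    then show ?case by simp
  qed
  then show ?thesis unfolding M_def B_def .
qed

lemma arcsine_mean_power_mult_Bernstein:
  "arcsine_mean (\<lambda>x. x ^ j * Bernstein n y x) =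
     real (n choose y) * Beta (real y + real j + 1/2) (real (n - y) + 1/2) / pi"
proof -
  have eq: "(\<lambda>x. x ^ j * Bernstein n y x) = (\<lambda>x. real (n choose y) * (x ^ (y + j) * (1 - x) ^ (n - y)))"
    by (auto simp: Bernstein_def power_add)
  show ?thesis unfolding eq arcsine_mean_cmult arcsine_mean_monomial by (simp add: add_ac)
qed

lemma ref_out_eq_arcsine_mean:
  assumes "y \<le> n" shows "ref_out n y = arcsine_mean (Bernstein n y)"
proof -
  have fact: "Gamma (real m + 1) = fact m" for m :: nat
    using Gamma_fact[of m] by (simp add: add.commute)
  define G where "G = Gamma (real y + 1/2) * Gamma (real (n - y) + 1/2)"
  have "real y + 1/2 + (real (n - y) + 1/2) = real n + 1" using assms by simp
  then have Beta: "Beta (real y + 1/2) (real (n - y) + 1/2) = G / fact n"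
    unfolding G_def by (simp only: Beta_def fact)
  have "arcsine_mean (Bernstein n y) = real (n choose y) * Beta (real y + 1/2) (real (n - y) + 1/2) / pi"
    using arcsine_mean_power_mult_Bernstein[of 0 n y] by simp
  also have "\<dots> = fact n / (fact y * fact (n - y)) * (G / fact n) / pi"
    unfolding Beta binomial_fact[OF assms, where 'a=real, symmetric] by simp
  also have "\<dots> = G / (pi * fact y * fact (n - y))"
    by (simp add: field_simps)
  also have "\<dots> = ref_out n y"
    unfolding G_def by (simp only: ref_out_def fact)
  finally show ?thesis ..
qed

lemma ref_out_pos: "y \<le> n \<Longrightarrow> ref_out n y > 0"
  unfolding ref_out_def by simp

lemma Beta_plus_nat_left:
  assumes "x > 0" "y > 0"
  shows "Beta (x + real j) y = Beta x y * (\<Prod>i<j. (x + real i) / (x + y + real i))"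
proof (induction j)
  case (Suc j)
  have "x + real j \<notin> \<int>\<^sub>\<le>\<^sub>0" using assms nonpos_Ints_nonpos by fastforce
  then have "(x + real j + y) * Beta (x + real j + 1) y = (x + real j) * Beta (x + real j) y"
    by (rule Beta_plus1_left)
  moreover have "x + real j + y > 0" using assms by simp
  ultimately have "Beta (x + real (Suc j)) y = Beta (x + real j) y * ((x + real j) / (x + y + real j))"
    by (simp add: field_simps)
  then show ?case using Suc by simp
qed simp

text \<open>\<open>posterior_mean n h y = E[h(X\<^sub>r) | Y\<^sub>r = y]\<close> (Bayes' rule).\<close>
definition posterior_mean :: "nat \<Rightarrow> (real \<Rightarrow> real) \<Rightarrow> nat \<Rightarrow> real" where
  "posterior_mean n h y = arcsine_mean (\<lambda>x. h x * Bernstein n y x) / ref_out n y"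

definition posterior_moment :: "nat \<Rightarrow> nat \<Rightarrow> real \<Rightarrow> real" where
  "posterior_moment n j t = (\<Prod>i<j. (t + real i + 1/2) / (real n + real i + 1))"

lemma posterior_mean_power:
  assumes "y \<le> n" shows "posterior_mean n (\<lambda>x. x ^ j) y = posterior_moment n j (real y)"
proof -
  have "real y + 1/2 + (real (n - y) + 1/2) = real n + 1" using assms by simp
  then have "Beta (real y + 1/2 + real j) (real (n - y) + 1/2) =
      Beta (real y + 1/2) (real (n - y) + 1/2) * posterior_moment n j (real y)"
    unfolding posterior_moment_def by (subst Beta_plus_nat_left) (simp_all add: add_ac)
  moreover have "Beta (real y + 1/2) (real (n - y) + 1/2) > 0"
    by (simp add: Beta_def)
  ultimately show ?thesis
    using assms arcsine_mean_power_mult_Bernstein[of j n y] arcsine_mean_power_mult_Bernstein[of 0 n y]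
    by (simp add: posterior_mean_def ref_out_eq_arcsine_mean add_ac)
qed

lemma low_degree_posterior_moment_leading:
  "low_degree j (\<lambda>t. posterior_moment n j t - (\<Prod>i<j. 1 / (real n + real i + 1)) * t ^ j)"
proof (induction j)
  case 0
  then show ?case by (simp add: posterior_moment_def low_degree_zero)
next
  case (Suc j)
  define b where "b = 1 / (real n + real j + 1)"
  define c where "c = (real j + 1/2) / (real n + real j + 1)"
  have "posterior_moment n (Suc j) t = posterior_moment n j t * (b * t + c)" for t
    unfolding posterior_moment_def b_def c_def by (simp add: add_divide_distrib)
  moreover have "low_degree (Suc j) (\<lambda>t. (b * t + c) * (posterior_moment n j t - (\<Prod>i<j. 1 / (real n + real i + 1)) * t ^ j)
      + ((\<Prod>i<j. 1 / (real n + real i + 1)) * c) * t ^ j)"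
    by (intro low_degree_add low_degree_mult_linear Suc low_degree_cmult low_degree_power) simp
  ultimately show ?case by (simp add: b_def algebra_simps)
qed

section \<open>The round-trip operator and its eigenfunctions\<close>

definition falling_fact :: "nat \<Rightarrow> real \<Rightarrow> real" where
  "falling_fact m t = (\<Prod>i<m. t - real i)"

lemma falling_fact_Suc_shift: "falling_fact (Suc m) t = t * falling_fact m (t - 1)"
  unfolding falling_fact_def by (subst prod.lessThan_Suc_shift) (simp add: algebra_simps)

lemma low_degree_falling_fact_minus_power: "low_degree m (\<lambda>t. falling_fact m t - t ^ m)"
proof (induction m)
  case 0
  then show ?case by (simp add: falling_fact_def low_degree_zero)
next
  case (Suc m)
  have "low_degree (Suc m) (\<lambda>t. (1 * t + (- real m)) * (falling_fact m t - t ^ m) + (- real m) * t ^ m)"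
    by (intro low_degree_add low_degree_mult_linear Suc low_degree_cmult low_degree_power) simp
  then show ?case by (simp add: falling_fact_def algebra_simps)
qed

lemma Bernstein_Suc_Suc_mult:
  "Bernstein (Suc n) (Suc y) x * real (Suc y) = real (Suc n) * x * Bernstein n y x"
proof -
  have "real (Suc n choose Suc y) * real (Suc y) = real (Suc n) * real (n choose y)"
    using Suc_times_binomial_eq[of n y] by (metis of_nat_mult)
  then show ?thesis unfolding Bernstein_def by (simp add: mult_ac)
qed

lemma sum_Bernstein_falling_fact:
  "(\<Sum>y\<le>n. Bernstein n y x * falling_fact m (real y)) = falling_fact m (real n) * x ^ m"
proof (induction m arbitrary: n)
  case 0
  then show ?case by (simp add: falling_fact_def)
next
  case (Suc m)
  show ?case
  proof (cases n)
    case 0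
    then show ?thesis by (simp add: falling_fact_Suc_shift)
  next
    case (Suc n')
    have "(\<Sum>y\<le>n. Bernstein n y x * falling_fact (Suc m) (real y)) =
        (\<Sum>y\<le>n'. Bernstein (Suc n') (Suc y) x * real (Suc y) * falling_fact m (real y))"
      unfolding Suc by (subst sum.atMost_Suc_shift) (simp add: falling_fact_Suc_shift mult_ac)
    also have "\<dots> = real (Suc n') * x * (\<Sum>y\<le>n'. Bernstein n' y x * falling_fact m (real y))"
      unfolding Bernstein_Suc_Suc_mult sum_distrib_left by (simp add: mult_ac)
    also have "\<dots> = falling_fact (Suc m) (real n) * x ^ Suc m"
      unfolding Suc.IH Suc by (simp add: falling_fact_Suc_shift)
    finally show ?thesis .
  qed
qed

definition bernstein_op :: "nat \<Rightarrow> (real \<Rightarrow> real) \<Rightarrow> real \<Rightarrow> real" where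
  "bernstein_op n q x = (\<Sum>y\<le>n. Bernstein n y x * q (real y))"

lemma bernstein_op_diff_falling_fact:
  "bernstein_op n (\<lambda>t. q t - a * falling_fact j t) x =
     bernstein_op n q x - a * falling_fact j (real n) * x ^ j"
proof -
  have "(\<Sum>y\<le>n. Bernstein n y x * (a * falling_fact j (real y))) =
      a * (\<Sum>y\<le>n. Bernstein n y x * falling_fact j (real y))"
    by (simp add: sum_distrib_left mult.left_commute)
  then show ?thesis
    unfolding bernstein_op_def right_diff_distrib sum_subtractf sum_Bernstein_falling_fact
    by (simp add: mult.assoc)
qed

lemma low_degree_minus_falling_fact:
  assumes "low_degree j (\<lambda>t. q t - a * t ^ j)"
  shows "low_degree j (\<lambda>t. q t - a * falling_fact j t)"
proof -
  have "low_degree j (\<lambda>t. (q t - a * t ^ j) - a * (falling_fact j t - t ^ j))"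
    by (rule low_degree_diff[OF assms low_degree_cmult[OF low_degree_falling_fact_minus_power]])
  then show ?thesis by (simp add: algebra_simps)
qed

lemma low_degree_bernstein_op: "low_degree j q \<Longrightarrow> low_degree j (bernstein_op n q)"
proof (induction j arbitrary: q)
  case 0
  then show ?case by (simp add: bernstein_op_def low_degree_0_eq_0 low_degree_zero)
next
  case (Suc j)
  obtain a where "low_degree j (\<lambda>t. q t - a * t ^ j)"
    using low_degree_Suc_obtain_leading[OF Suc.prems] ..
  then have "low_degree j (bernstein_op n (\<lambda>t. q t - a * falling_fact j t))"
    by (intro Suc.IH low_degree_minus_falling_fact)
  then show ?case unfolding bernstein_op_diff_falling_fact by (rule low_degree_SucI)
qed

lemma low_degree_bernstein_op_leading:
  assumes "low_degree j (\<lambda>t. q t - a * t ^ j)"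
  shows "low_degree j (\<lambda>x. bernstein_op n q x - a * falling_fact j (real n) * x ^ j)"
  using low_degree_bernstein_op[OF low_degree_minus_falling_fact[OF assms]]
  unfolding bernstein_op_diff_falling_fact .

lemma continuous_on_Bernstein: "continuous_on UNIV (Bernstein n y)"
  unfolding Bernstein_def by (intro continuous_intros)

lemma posterior_mean_add:
  "continuous_on UNIV f \<Longrightarrow> continuous_on UNIV g \<Longrightarrow>
     posterior_mean n (\<lambda>x. f x + g x) y = posterior_mean n f y + posterior_mean n g y"
  unfolding posterior_mean_def distrib_right
  by (simp add: arcsine_mean_add continuous_intros continuous_on_Bernstein add_divide_distrib)

lemma posterior_mean_sum:
  "finite A \<Longrightarrow> (\<And>i. i \<in> A \<Longrightarrow> continuous_on UNIV (f i)) \<Longrightarrow>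
     posterior_mean n (\<lambda>x. \<Sum>i\<in>A. f i x) y = (\<Sum>i\<in>A. posterior_mean n (f i) y)"
  unfolding posterior_mean_def sum_distrib_right
  by (simp add: arcsine_mean_sum continuous_intros continuous_on_Bernstein sum_divide_distrib)

lemma posterior_mean_cmult: "posterior_mean n (\<lambda>x. c * f x) y = c * posterior_mean n f y"
  unfolding posterior_mean_def by (simp add: mult.assoc arcsine_mean_cmult)

text \<open>The binomial channel followed by the reverse channel of the reference pair \<open>(X\<^sub>r, Y\<^sub>r)\<close>.\<close>
definition round_trip :: "nat \<Rightarrow> (real \<Rightarrow> real) \<Rightarrow> real \<Rightarrow> real" where
  "round_trip n h x = (\<Sum>y\<le>n. Bernstein n y x * posterior_mean n h y)"

lemma continuous_on_round_trip: "continuous_on UNIV (round_trip n h)"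
  unfolding round_trip_def by (intro continuous_intros continuous_on_Bernstein)

lemma round_trip_add:
  "continuous_on UNIV f \<Longrightarrow> continuous_on UNIV g \<Longrightarrow>
     round_trip n (\<lambda>x. f x + g x) x = round_trip n f x + round_trip n g x"
  unfolding round_trip_def by (simp add: posterior_mean_add distrib_left sum.distrib)

lemma round_trip_sum:
  "finite A \<Longrightarrow> (\<And>i. i \<in> A \<Longrightarrow> continuous_on UNIV (f i)) \<Longrightarrow>
     round_trip n (\<lambda>x. \<Sum>i\<in>A. f i x) x = (\<Sum>i\<in>A. round_trip n (f i) x)"
  unfolding round_trip_def by (simp add: posterior_mean_sum sum_distrib_left sum.swap[of _ A])

lemma round_trip_cmult: "round_trip n (\<lambda>x. c * f x) x = c * round_trip n f x"
  unfolding round_trip_def by (simp add: posterior_mean_cmult sum_distrib_left mult_ac)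

definition chebyshev_eigenvalue :: "nat \<Rightarrow> nat \<Rightarrow> real" where
  "chebyshev_eigenvalue n k = (\<Prod>i<k. (real n - real i) / (real n + real i + 1))"

lemma low_degree_round_trip_power_leading:
  "low_degree j (\<lambda>x. round_trip n (\<lambda>z. z ^ j) x - chebyshev_eigenvalue n j * x ^ j)"
proof -
  have "round_trip n (\<lambda>z. z ^ j) = bernstein_op n (posterior_moment n j)"
    unfolding round_trip_def bernstein_op_def by (intro ext sum.cong) (simp_all add: posterior_mean_power)
  moreover have "chebyshev_eigenvalue n j = (\<Prod>i<j. 1 / (real n + real i + 1)) * falling_fact j (real n)"
    unfolding chebyshev_eigenvalue_def falling_fact_def by (simp flip: prod.distrib)
  ultimately show ?thesis
    using low_degree_bernstein_op_leading[OF low_degree_posterior_moment_leading] by (simp add: mult_ac)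
qed

lemma low_degree_round_trip_leading:
  assumes "low_degree j (\<lambda>x. p x - a * x ^ j)"
  shows "low_degree j (\<lambda>x. round_trip n p x - a * chebyshev_eigenvalue n j * x ^ j)"
proof -
  obtain c where c: "\<And>x. p x - a * x ^ j = (\<Sum>i<j. c i * x ^ i)"
    using assms unfolding low_degree_def by blast
  have "round_trip n p x = a * round_trip n (\<lambda>z. z ^ j) x + (\<Sum>i<j. c i * round_trip n (\<lambda>z. z ^ i) x)" for x
  proof -
    have "p = (\<lambda>x. a * x ^ j + (\<Sum>i<j. c i * x ^ i))" using c by (auto simp: algebra_simps)
    then have "round_trip n p x = round_trip n (\<lambda>z. a * z ^ j) x + round_trip n (\<lambda>x. \<Sum>i<j. c i * x ^ i) x"
      by (simp add: round_trip_add continuous_intros)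
    then show ?thesis by (simp add: round_trip_sum round_trip_cmult continuous_intros)
  qed
  moreover have "low_degree j (\<lambda>x. a * (round_trip n (\<lambda>z. z ^ j) x - chebyshev_eigenvalue n j * x ^ j)
      + (\<Sum>i<j. c i * round_trip n (\<lambda>z. z ^ i) x))"
    by (intro low_degree_add low_degree_cmult low_degree_round_trip_power_leading low_degree_sum
        low_degree_mono[OF _ low_degree_SucI[OF low_degree_round_trip_power_leading]]) auto
  ultimately show ?thesis by (simp add: algebra_simps)
qed

lemma low_degree_round_trip: "low_degree j p \<Longrightarrow> low_degree j (round_trip n p)"
proof (cases j)
  case 0
  moreover assume "low_degree j p"
  ultimately have "round_trip n p = (\<lambda>x. 0)"
    by (auto simp: round_trip_def posterior_mean_def arcsine_mean_def low_degree_0_eq_0)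
  then show ?thesis by (simp add: low_degree_zero)
next
  case (Suc j')
  assume "low_degree j p"
  then obtain a where "low_degree j' (\<lambda>x. p x - a * x ^ j')"
    using Suc low_degree_Suc_obtain_leading by blast
  from low_degree_SucI[OF low_degree_round_trip_leading[OF this]] show ?thesis
    using Suc by simp
qed

lemma arcsine_mean_mult_round_trip:
  assumes "continuous_on UNIV g"
  shows "arcsine_mean (\<lambda>x. g x * round_trip n h x) =
    (\<Sum>y\<le>n. ref_out n y * posterior_mean n g y * posterior_mean n h y)"
proof -
  have "arcsine_mean (\<lambda>x. g x * round_trip n h x) =
      (\<Sum>y\<le>n. arcsine_mean (\<lambda>x. posterior_mean n h y * (g x * Bernstein n y x)))"
    unfolding round_trip_def sum_distrib_left
    by (subst arcsine_mean_sum) (auto intro!: continuous_intros assms continuous_on_Bernstein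
        intro: arg_cong[of _ _ arcsine_mean] simp: mult_ac)
  also have "\<dots> = (\<Sum>y\<le>n. ref_out n y * posterior_mean n g y * posterior_mean n h y)"
    unfolding arcsine_mean_cmult by (intro sum.cong) (auto simp: posterior_mean_def ref_out_pos less_imp_neq[symmetric])
  finally show ?thesis .
qed

lemma round_trip_self_adjoint:
  "continuous_on UNIV g \<Longrightarrow> continuous_on UNIV h \<Longrightarrow>
     arcsine_mean (\<lambda>x. g x * round_trip n h x) = arcsine_mean (\<lambda>x. round_trip n g x * h x)"
  using arcsine_mean_mult_round_trip[of g n h] arcsine_mean_mult_round_trip[of h n g]
  by (simp add: mult_ac)

text \<open>The leading terms cancel, so the difference \<open>d\<close> of the two sides has degree \<open>< k\<close>; by
  self-adjointness \<open>E d\<^sup>2 = E (round_trip n d) C\<^sub>k - \<lambda>\<^sub>k E d C\<^sub>k = 0\<close>.\<close>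
lemma round_trip_shifted_chebyshev:
  assumes "0 \<le> x" "x \<le> 1"
  shows "round_trip n (shifted_chebyshev k) x = chebyshev_eigenvalue n k * shifted_chebyshev k x"
proof -
  obtain a where a: "low_degree k (\<lambda>x. shifted_chebyshev k x - a * x ^ k)"
    using low_degree_Suc_obtain_leading[OF low_degree_shifted_chebyshev] by blast
  define d where "d x = round_trip n (shifted_chebyshev k) x - chebyshev_eigenvalue n k * shifted_chebyshev k x" for x
  have "low_degree k (\<lambda>x. (round_trip n (shifted_chebyshev k) x - a * chebyshev_eigenvalue n k * x ^ k)
      - chebyshev_eigenvalue n k * (shifted_chebyshev k x - a * x ^ k))"
    by (rule low_degree_diff[OF low_degree_round_trip_leading[OF a] low_degree_cmult[OF a]])
  then have d: "low_degree k d" unfolding d_def by (simp add: algebra_simps)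
  have cont: "continuous_on UNIV d" by (rule continuous_on_low_degree[OF d])
  have "(\<lambda>x. d x * d x) = (\<lambda>x. d x * round_trip n (shifted_chebyshev k) x
      - chebyshev_eigenvalue n k * (d x * shifted_chebyshev k x))"
    by (auto simp: d_def algebra_simps)
  then have "arcsine_mean (\<lambda>x. d x * d x) = arcsine_mean (\<lambda>x. d x * round_trip n (shifted_chebyshev k) x)
      - chebyshev_eigenvalue n k * arcsine_mean (\<lambda>x. d x * shifted_chebyshev k x)"
    by (simp add: arcsine_mean_diff arcsine_mean_cmult continuous_intros cont
        continuous_on_round_trip continuous_on_shifted_chebyshev)
  also have "arcsine_mean (\<lambda>x. d x * round_trip n (shifted_chebyshev k) x) =
      arcsine_mean (\<lambda>x. round_trip n d x * shifted_chebyshev k x)"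
    by (rule round_trip_self_adjoint[OF cont continuous_on_shifted_chebyshev])
  finally have "arcsine_mean (\<lambda>x. d x * d x) = 0"
    using arcsine_mean_low_degree_mult_shifted_chebyshev[OF d]
      arcsine_mean_low_degree_mult_shifted_chebyshev[OF low_degree_round_trip[OF d]] by simp
  from arcsine_mean_square_eq_0_imp[OF cont this assms] show ?thesis unfolding d_def by simp
qed

lemma chebyshev_eigenvalue_nonneg: "chebyshev_eigenvalue n k \<ge> 0"
proof (cases "k \<le> n")
  case True
  then show ?thesis unfolding chebyshev_eigenvalue_def by (intro prod_nonneg) auto
next
  case False
  then have "chebyshev_eigenvalue n k = 0"
    unfolding chebyshev_eigenvalue_def by (intro prod_zero bexI[of _ n]) auto
  then show ?thesis by simp
qed

lemma exp_le_chebyshev_eigenvalue_factor: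
  assumes "i < D" "D \<le> n"
  shows "exp (- ((2 * real i + 1) / (real n - real D + 1))) \<le> (real n - real i) / (real n + real i + 1)"
proof -
  define t where "t = (2 * real i + 1) / (real n - real i)"
  have "real n - real i \<ge> real n - real D + 1" "real n - real D + 1 > 0"
    using assms by auto
  then have "t \<le> (2 * real i + 1) / (real n - real D + 1)"
    unfolding t_def by (intro divide_left_mono) auto
  then have "exp (- ((2 * real i + 1) / (real n - real D + 1))) \<le> exp (- t)"
    by simp
  also have "exp (- t) \<le> 1 / (1 + t)"
  proof -
    have "t \<ge> 0" unfolding t_def using assms by simp
    then show ?thesis using exp_ge_add_one_self[of t] by (simp add: exp_minus field_simps)
  qed
  also have "1 / (1 + t) = (real n - real i) / (real n + real i + 1)"
    unfolding t_def using assms by (simp add: field_simps)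
  finally show ?thesis .
qed

lemma chebyshev_eigenvalue_ge_exp:
  assumes "D \<le> n"
  shows "chebyshev_eigenvalue n D \<ge> exp (- (real D ^ 2 / (real n - real D + 1)))"
proof -
  have odd: "(\<Sum>i<m. 2 * real i + 1) = real m ^ 2" for m
    by (induction m) (auto simp: power2_eq_square algebra_simps)
  have "(\<Sum>i<D. - ((2 * real i + 1) / (real n - real D + 1))) = - (real D ^ 2 / (real n - real D + 1))"
    by (simp add: sum_negf odd flip: sum_divide_distrib)
  then have "exp (- (real D ^ 2 / (real n - real D + 1))) =
      (\<Prod>i<D. exp (- ((2 * real i + 1) / (real n - real D + 1))))"
    by (metis exp_sum finite_lessThan)
  also have "\<dots> \<le> chebyshev_eigenvalue n D"
    unfolding chebyshev_eigenvalue_def using assms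
    by (intro prod_mono) (auto intro: exp_le_chebyshev_eigenvalue_factor)
  finally show ?thesis .
qed

lemma chebyshev_eigenvalue_antimono:
  assumes "k \<le> D" shows "chebyshev_eigenvalue n D \<le> chebyshev_eigenvalue n k"
proof -
  have "chebyshev_eigenvalue n (Suc m) \<le> chebyshev_eigenvalue n m" for m
  proof -
    have "chebyshev_eigenvalue n (Suc m) = chebyshev_eigenvalue n m * ((real n - real m) / (real n + real m + 1))"
      by (simp add: chebyshev_eigenvalue_def)
    also have "\<dots> \<le> chebyshev_eigenvalue n m * 1"
      by (intro mult_left_mono chebyshev_eigenvalue_nonneg) auto
    finally show ?thesis by simp
  qed
  then show ?thesis using decseq_SucI decseqD assms by metis
qed

section \<open>A lower bound on the chi-squared divergence\<close>

lemma chi2_nonneg: "(\<And>y. y \<le> n \<Longrightarrow> Q y > 0) \<Longrightarrow> chi2 n P Q \<ge> 0"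
  unfolding chi2_def by (intro sum_nonneg) (simp add: less_imp_le)

lemma chi2_test_function_bound:
  assumes Q: "\<And>y. y \<le> n \<Longrightarrow> Q y > 0"
  shows "(\<Sum>y\<le>n. (P y - Q y) * f y) ^ 2 \<le> chi2 n P Q * (\<Sum>y\<le>n. Q y * f y ^ 2)"
proof -
  have "(\<Sum>y\<le>n. ((P y - Q y) / sqrt (Q y)) * (sqrt (Q y) * f y)) ^ 2 \<le>
      (\<Sum>y\<le>n. ((P y - Q y) / sqrt (Q y)) ^ 2) * (\<Sum>y\<le>n. (sqrt (Q y) * f y) ^ 2)"
    by (rule Cauchy_Schwarz_ineq_sum)
  moreover have "(\<Sum>y\<le>n. ((P y - Q y) / sqrt (Q y)) * (sqrt (Q y) * f y)) = (\<Sum>y\<le>n. (P y - Q y) * f y)"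
    by (rule sum.cong) (auto dest!: Q)
  moreover have "(\<Sum>y\<le>n. ((P y - Q y) / sqrt (Q y)) ^ 2) = chi2 n P Q"
    unfolding chi2_def atLeast0AtMost by (rule sum.cong) (auto dest!: Q simp: power_divide less_imp_le)
  moreover have "(\<Sum>y\<le>n. (sqrt (Q y) * f y) ^ 2) = (\<Sum>y\<le>n. Q y * f y ^ 2)"
    by (rule sum.cong) (auto dest!: Q simp: power_mult_distrib less_imp_le)
  ultimately show ?thesis by simp
qed

lemma arcsine_mean_shifted_chebyshev_series:
  assumes "finite A" "0 \<notin> A"
  shows "arcsine_mean (\<lambda>x. \<Sum>k\<in>A. c k * shifted_chebyshev k x) = 0"
proof -
  have "arcsine_mean (\<lambda>x. \<Sum>k\<in>A. c k * shifted_chebyshev k x) =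
      (\<Sum>k\<in>A. c k * arcsine_mean (shifted_chebyshev k))"
    using assms(1) unfolding arcsine_mean_cmult[symmetric]
    by (rule arcsine_mean_sum) (intro continuous_intros continuous_on_shifted_chebyshev)
  also have "\<dots> = 0"
    using assms(2) by (intro sum.neutral ballI) (metis arcsine_mean_shifted_chebyshev leI less_one mult_zero_right)
  finally show ?thesis .
qed

lemma round_trip_shifted_chebyshev_series:
  "finite A \<Longrightarrow> 0 \<le> x \<Longrightarrow> x \<le> 1 \<Longrightarrow>
     round_trip n (\<lambda>z. \<Sum>k\<in>A. c k * shifted_chebyshev k z) x =
     (\<Sum>k\<in>A. c k * chebyshev_eigenvalue n k * shifted_chebyshev k x)"
  by (simp add: round_trip_sum round_trip_cmult round_trip_shifted_chebyshev continuous_intros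
      continuous_on_shifted_chebyshev mult.assoc)

lemma arcsine_mean_shifted_chebyshev_series_mult:
  assumes "finite A" "0 \<notin> A"
  shows "arcsine_mean (\<lambda>x. (\<Sum>l\<in>A. c l * shifted_chebyshev l x) * (\<Sum>k\<in>A. d k * shifted_chebyshev k x)) =
    (\<Sum>k\<in>A. c k * d k) / 2"
proof -
  have "arcsine_mean (\<lambda>x. (\<Sum>l\<in>A. c l * shifted_chebyshev l x) * (\<Sum>k\<in>A. d k * shifted_chebyshev k x)) =
      (\<Sum>l\<in>A. \<Sum>k\<in>A. c l * d k * arcsine_mean (\<lambda>x. shifted_chebyshev l x * shifted_chebyshev k x))"
    unfolding sum_product using assms(1)
    by (simp add: arcsine_mean_sum arcsine_mean_cmult[symmetric] continuous_intros
        continuous_on_shifted_chebyshev mult_ac)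
  also have "\<dots> = (\<Sum>l\<in>A. c l * d l / 2)"
  proof (rule sum.cong[OF refl])
    fix l assume l: "l \<in> A"
    then have "(\<Sum>k\<in>A. c l * d k * arcsine_mean (\<lambda>x. shifted_chebyshev l x * shifted_chebyshev k x)) =
        (\<Sum>k\<in>A. if k = l then c l * d l / 2 else 0)"
      using assms(2) by (intro sum.cong) (auto simp: arcsine_mean_shifted_chebyshev_mult)
    then show "(\<Sum>k\<in>A. c l * d k * arcsine_mean (\<lambda>x. shifted_chebyshev l x * shifted_chebyshev k x)) =
        c l * d l / 2"
      using l assms(1) by simp
  qed
  finally show ?thesis by (simp add: sum_divide_distrib)
qed

lemma sum_ref_out_posterior_mean:
  assumes "continuous_on UNIV h"
  shows "(\<Sum>y\<le>n. ref_out n y * posterior_mean n h y) = arcsine_mean h"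
proof -
  have "(\<Sum>y\<le>n. ref_out n y * posterior_mean n h y) = arcsine_mean (\<lambda>x. \<Sum>y\<le>n. h x * Bernstein n y x)"
    unfolding posterior_mean_def using assms
    by (subst arcsine_mean_sum) (auto intro!: sum.cong continuous_intros continuous_on_Bernstein
        simp: ref_out_pos less_imp_neq[symmetric])
  then show ?thesis by (simp flip: sum_distrib_left)
qed

lemma sum_binom_out_posterior_mean:
  "finite S \<Longrightarrow> (\<Sum>y\<le>n. binom_out n S w y * posterior_mean n h y) = (\<Sum>x\<in>S. w x * round_trip n h x)"
  unfolding binom_out_def round_trip_def Bernstein_def[symmetric] sum_distrib_right sum_distrib_left
  by (subst sum.swap) (simp only: mult.assoc)

lemma sum_binom_out_posterior_mean_shifted_chebyshev_series:
  assumes "finite S" "S \<subseteq> {0..1}" "finite A"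
  shows "(\<Sum>y\<le>n. binom_out n S w y * posterior_mean n (\<lambda>z. \<Sum>k\<in>A. c k * shifted_chebyshev k z) y) =
    (\<Sum>k\<in>A. c k * chebyshev_eigenvalue n k * (\<Sum>x\<in>S. w x * shifted_chebyshev k x))"
proof -
  have "(\<Sum>x\<in>S. w x * round_trip n (\<lambda>z. \<Sum>k\<in>A. c k * shifted_chebyshev k z) x) =
      (\<Sum>x\<in>S. \<Sum>k\<in>A. c k * chebyshev_eigenvalue n k * (w x * shifted_chebyshev k x))"
    using assms by (intro sum.cong) (auto simp: round_trip_shifted_chebyshev_series sum_distrib_left mult_ac)
  also have "\<dots> = (\<Sum>k\<in>A. c k * chebyshev_eigenvalue n k * (\<Sum>x\<in>S. w x * shifted_chebyshev k x))"
    by (subst sum.swap) (simp add: sum_distrib_left)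
  finally show ?thesis unfolding sum_binom_out_posterior_mean[OF assms(1)] .
qed

lemma sum_ref_out_posterior_mean_sq_shifted_chebyshev_series:
  fixes c :: "nat \<Rightarrow> real"
  assumes "finite A" "0 \<notin> A"
  defines "h \<equiv> \<lambda>x. \<Sum>k\<in>A. c k * shifted_chebyshev k x"
  shows "(\<Sum>y\<le>n. ref_out n y * posterior_mean n h y ^ 2) = (\<Sum>k\<in>A. chebyshev_eigenvalue n k * c k ^ 2) / 2"
proof -
  have h: "continuous_on UNIV h"
    unfolding h_def by (intro continuous_intros continuous_on_shifted_chebyshev)
  have "(\<Sum>y\<le>n. ref_out n y * posterior_mean n h y ^ 2) = arcsine_mean (\<lambda>x. h x * round_trip n h x)"
    unfolding arcsine_mean_mult_round_trip[OF h] by (simp add: power2_eq_square mult_ac)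
  also have "\<dots> = arcsine_mean (\<lambda>x. h x * (\<Sum>k\<in>A. (c k * chebyshev_eigenvalue n k) * shifted_chebyshev k x))"
    using assms(1) unfolding h_def by (intro arcsine_mean_cong) (simp add: round_trip_shifted_chebyshev_series)
  also have "\<dots> = (\<Sum>k\<in>A. chebyshev_eigenvalue n k * c k ^ 2) / 2"
    unfolding h_def using assms(1,2)
    by (subst arcsine_mean_shifted_chebyshev_series_mult) (simp_all add: power2_eq_square mult_ac)
  finally show ?thesis .
qed

lemma chi2_ge_of_test_function:
  assumes Q: "\<And>y. y \<le> n \<Longrightarrow> Q y > 0" and "T \<ge> 0"
    and "(\<Sum>y\<le>n. Q y * f y) = 0" "(\<Sum>y\<le>n. P y * f y) = T" "(\<Sum>y\<le>n. Q y * f y ^ 2) = T / 2"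
  shows "2 * T \<le> chi2 n P Q"
proof -
  have "(\<Sum>y\<le>n. (P y - Q y) * f y) = T"
    using assms(3,4) by (simp add: left_diff_distrib sum_subtractf)
  then have "T ^ 2 \<le> chi2 n P Q * (T / 2)"
    using chi2_test_function_bound[of n Q P f, OF Q] unfolding assms(5) by simp
  then show ?thesis
    using chi2_nonneg[of n Q P, OF Q] \<open>T \<ge> 0\<close>
    by (cases "T = 0") (auto simp: power2_eq_square field_simps)
qed

lemma chi2_ge_chebyshev_moments:
  assumes S: "finite S" "S \<subseteq> {0..1}"
  shows "2 * (\<Sum>k\<in>{1..D}. chebyshev_eigenvalue n k * (\<Sum>x\<in>S. w x * shifted_chebyshev k x) ^ 2)
    \<le> chi2 n (binom_out n S w) (ref_out n)"
proof (rule chi2_ge_of_test_function)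
  define m where "m k = (\<Sum>x\<in>S. w x * shifted_chebyshev k x)" for k
  define h where "h x = (\<Sum>k\<in>{1..D}. m k * shifted_chebyshev k x)" for x
  have h: "continuous_on UNIV h"
    unfolding h_def by (intro continuous_intros continuous_on_shifted_chebyshev)
  show "(\<Sum>y\<le>n. ref_out n y * posterior_mean n h y) = 0"
    unfolding sum_ref_out_posterior_mean[OF h] h_def by (simp add: arcsine_mean_shifted_chebyshev_series)
  show "(\<Sum>y\<le>n. binom_out n S w y * posterior_mean n h y) =
      (\<Sum>k\<in>{1..D}. chebyshev_eigenvalue n k * m k ^ 2)"
    unfolding h_def[abs_def] sum_binom_out_posterior_mean_shifted_chebyshev_series[OF S finite_atLeastAtMost]
    by (simp add: m_def power2_eq_square mult_ac)
  show "(\<Sum>y\<le>n. ref_out n y * posterior_mean n h y ^ 2) =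
      (\<Sum>k\<in>{1..D}. chebyshev_eigenvalue n k * m k ^ 2) / 2"
    unfolding h_def[abs_def] by (rule sum_ref_out_posterior_mean_sq_shifted_chebyshev_series) auto
qed (auto intro!: ref_out_pos sum_nonneg mult_nonneg_nonneg chebyshev_eigenvalue_nonneg)

section \<open>Chebyshev moments of atomic distributions\<close>

definition fejer_sum :: "nat \<Rightarrow> real \<Rightarrow> real" where
  "fejer_sum N p = (\<Sum>a<N. \<Sum>b<N. cos ((real a - real b) * p))"

lemma fejer_sum_eq: "fejer_sum N p = (\<Sum>a<N. cos (real a * p)) ^ 2 + (\<Sum>a<N. sin (real a * p)) ^ 2"
proof -
  have "fejer_sum N p =
      (\<Sum>a<N. \<Sum>b<N. cos (real a * p) * cos (real b * p) + sin (real a * p) * sin (real b * p))"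
    unfolding fejer_sum_def by (simp add: left_diff_distrib cos_diff)
  also have "\<dots> = (\<Sum>a<N. cos (real a * p)) * (\<Sum>b<N. cos (real b * p)) +
      (\<Sum>a<N. sin (real a * p)) * (\<Sum>b<N. sin (real b * p))"
    by (simp add: sum.distrib sum_product)
  finally show ?thesis by (simp add: power2_eq_square)
qed

lemma sum_cos_diff_mult_cos_diff:
  "(\<Sum>a<N. \<Sum>b<N. cos ((real a - real b) * p) * cos ((real a - real b) * q)) =
     (fejer_sum N (p + q) + fejer_sum N (p - q)) / 2"
proof -
  have "cos (d * p) * cos (d * q) = (cos (d * (p + q)) + cos (d * (p - q))) / 2" for d
    by (simp add: distrib_left right_diff_distrib cos_add cos_diff)
  then show ?thesis
    unfolding fejer_sum_def by (simp add: sum.distrib add_divide_distrib flip: sum_divide_distrib)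
qed

lemma sum_sum_swap_pairs:
  "(\<Sum>a\<in>A. \<Sum>b\<in>B. \<Sum>x\<in>C. \<Sum>z\<in>D. f a b x z) = (\<Sum>x\<in>C. \<Sum>z\<in>D. \<Sum>a\<in>A. \<Sum>b\<in>B. f a b x z)"
proof -
  have "(\<Sum>a\<in>A. \<Sum>b\<in>B. \<Sum>x\<in>C. \<Sum>z\<in>D. f a b x z) = (\<Sum>a\<in>A. \<Sum>x\<in>C. \<Sum>b\<in>B. \<Sum>z\<in>D. f a b x z)"
    by (rule sum.cong[OF refl]) (rule sum.swap)
  also have "\<dots> = (\<Sum>x\<in>C. \<Sum>a\<in>A. \<Sum>z\<in>D. \<Sum>b\<in>B. f a b x z)"
    by (subst sum.swap) (rule sum.cong[OF refl], rule sum.cong[OF refl], rule sum.swap)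
  also have "\<dots> = (\<Sum>x\<in>C. \<Sum>z\<in>D. \<Sum>a\<in>A. \<Sum>b\<in>B. f a b x z)"
    by (rule sum.cong[OF refl]) (rule sum.swap)
  finally show ?thesis .
qed

text \<open>The N x N Toeplitz matrix with entries M(a - b) of a mixture of \<open>card S\<close> cosines is large in
  Frobenius norm: expanding the square, every cross term is a nonnegative Fejer sum and the
  diagonal terms alone contribute \<open>N\<^sup>2/2 \<Sum> w\<^sup>2 \<ge> N\<^sup>2/(2 card S)\<close>.\<close>
lemma sum_sq_cos_mixture_toeplitz_ge:
  fixes S :: "'a set" and w \<theta> :: "'a \<Rightarrow> real"
  assumes S: "finite S" "S \<noteq> {}" and w: "\<And>x. x \<in> S \<Longrightarrow> w x \<ge> 0" and w1: "(\<Sum>x\<in>S. w x) = 1"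
  defines "M \<equiv> \<lambda>t. \<Sum>x\<in>S. w x * cos (t * \<theta> x)"
  shows "(\<Sum>a<N. \<Sum>b<N. M (real a - real b) ^ 2) \<ge> real N ^ 2 / (2 * real (card S))"
proof -
  define G where "G p q = (\<Sum>a<N. \<Sum>b<N. cos ((real a - real b) * p) * cos ((real a - real b) * q))" for p q
  have G_nonneg: "G p q \<ge> 0" for p q
    unfolding G_def sum_cos_diff_mult_cos_diff fejer_sum_eq by simp
  have G_diag: "G p p \<ge> real N ^ 2 / 2" for p
    unfolding G_def sum_cos_diff_mult_cos_diff fejer_sum_eq by (simp add: fejer_sum_def)
  have "(\<Sum>a<N. \<Sum>b<N. M (real a - real b) ^ 2) = (\<Sum>a<N. \<Sum>b<N. \<Sum>x\<in>S. \<Sum>z\<in>S.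
      w x * w z * (cos ((real a - real b) * \<theta> x) * cos ((real a - real b) * \<theta> z)))"
    unfolding M_def power2_eq_square sum_product by (intro sum.cong refl) (simp add: mult_ac)
  also have "\<dots> = (\<Sum>x\<in>S. \<Sum>z\<in>S. \<Sum>a<N. \<Sum>b<N.
      w x * w z * (cos ((real a - real b) * \<theta> x) * cos ((real a - real b) * \<theta> z)))"
    by (rule sum_sum_swap_pairs)
  also have "\<dots> = (\<Sum>x\<in>S. \<Sum>z\<in>S. w x * w z * G (\<theta> x) (\<theta> z))"
    unfolding G_def by (simp add: sum_distrib_left)
  finally have expand: "(\<Sum>a<N. \<Sum>b<N. M (real a - real b) ^ 2) =
      (\<Sum>x\<in>S. \<Sum>z\<in>S. w x * w z * G (\<theta> x) (\<theta> z))" .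
  have "(\<Sum>x\<in>S. w x * w x * G (\<theta> x) (\<theta> x)) \<le> (\<Sum>x\<in>S. \<Sum>z\<in>S. w x * w z * G (\<theta> x) (\<theta> z))"
    using S(1) w by (intro sum_mono member_le_sum) (auto intro!: mult_nonneg_nonneg G_nonneg)
  moreover have "(\<Sum>x\<in>S. w x * w x) * (real N ^ 2 / 2) \<le> (\<Sum>x\<in>S. w x * w x * G (\<theta> x) (\<theta> x))"
    unfolding sum_distrib_right using w by (intro sum_mono mult_left_mono G_diag) simp
  moreover have "1 / real (card S) \<le> (\<Sum>x\<in>S. w x * w x)"
  proof -
    have "(\<Sum>x\<in>S. w x * 1) ^ 2 \<le> (\<Sum>x\<in>S. (w x)\<^sup>2) * (\<Sum>x\<in>S. 1\<^sup>2)" by (rule Cauchy_Schwarz_ineq_sum)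
    then show ?thesis using w1 S by (simp add: power2_eq_square field_simps card_gt_0_iff)
  qed
  then have "1 / real (card S) * (real N ^ 2 / 2) \<le> (\<Sum>x\<in>S. w x * w x) * (real N ^ 2 / 2)"
    by (rule mult_right_mono) simp
  ultimately show ?thesis unfolding expand by simp
qed

lemma sum_sq_even_toeplitz_row_le:
  fixes g :: "real \<Rightarrow> real"
  assumes even: "\<And>t. g (- t) = g t" and "a < N"
  shows "(\<Sum>b<N. g (real a - real b) ^ 2) \<le> g 0 ^ 2 + 2 * (\<Sum>k\<in>{1..<N}. g (real k) ^ 2)"
proof -
  have below: "(\<Sum>b<a. g (real a - real b) ^ 2) \<le> (\<Sum>k\<in>{1..<N}. g (real k) ^ 2)"
  proof -
    have "(\<Sum>b<a. g (real a - real b) ^ 2) = (\<Sum>k\<in>(\<lambda>b. a - b) ` {..<a}. g (real k) ^ 2)"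
      by (subst sum.reindex) (auto simp: inj_on_def of_nat_diff intro!: sum.cong)
    also have "\<dots> \<le> (\<Sum>k\<in>{1..<N}. g (real k) ^ 2)"
      by (rule sum_mono2) (use \<open>a < N\<close> in auto)
    finally show ?thesis .
  qed
  have above: "(\<Sum>b\<in>{a<..<N}. g (real a - real b) ^ 2) \<le> (\<Sum>k\<in>{1..<N}. g (real k) ^ 2)"
  proof -
    have "g (real a - real b) = g (real (b - a))" if "a < b" for b
      using that even[of "real (b - a)"] by (simp add: of_nat_diff)
    then have "(\<Sum>b\<in>{a<..<N}. g (real a - real b) ^ 2) = (\<Sum>k\<in>(\<lambda>b. b - a) ` {a<..<N}. g (real k) ^ 2)"
      by (subst sum.reindex) (auto simp: inj_on_def intro!: sum.cong)
    also have "\<dots> \<le> (\<Sum>k\<in>{1..<N}. g (real k) ^ 2)"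
      by (rule sum_mono2) auto
    finally show ?thesis .
  qed
  have split: "{..<N} = {..<a} \<union> ({a} \<union> {a<..<N})" using \<open>a < N\<close> by auto
  have "(\<Sum>b<N. g (real a - real b) ^ 2) =
      (\<Sum>b<a. g (real a - real b) ^ 2) + (\<Sum>b\<in>{a} \<union> {a<..<N}. g (real a - real b) ^ 2)"
    unfolding split by (rule sum.union_disjoint) auto
  also have "(\<Sum>b\<in>{a} \<union> {a<..<N}. g (real a - real b) ^ 2) = g 0 ^ 2 + (\<Sum>b\<in>{a<..<N}. g (real a - real b) ^ 2)"
    by (subst sum.union_disjoint) auto
  finally show ?thesis using below above by simp
qed

lemma sum_sq_chebyshev_moments_ge:
  assumes S: "finite S" "S \<subseteq> {0..1}" "card S = K" "K \<ge> 1"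
    and w: "\<And>x. x \<in> S \<Longrightarrow> w x \<ge> 0" and w1: "(\<Sum>x\<in>S. w x) = 1"
  shows "(\<Sum>k\<in>{1..4*K-2}. (\<Sum>x\<in>S. w x * shifted_chebyshev k x) ^ 2) \<ge> 1/4"
proof -
  define N where "N = 4 * K - 1"
  define M where "M t = (\<Sum>x\<in>S. w x * cos (t * arccos (1 - 2 * x)))" for t
  define Z where "Z = (\<Sum>k\<in>{1..4*K-2}. (\<Sum>x\<in>S. w x * shifted_chebyshev k x) ^ 2)"
  have M_nat: "M (real k) = (\<Sum>x\<in>S. w x * shifted_chebyshev k x)" for k
    unfolding M_def using S(2) by (intro sum.cong) (auto simp: shifted_chebyshev_arccos mult.commute)
  have "real N ^ 2 / (2 * real K) \<le> (\<Sum>a<N. \<Sum>b<N. M (real a - real b) ^ 2)"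
    unfolding M_def S(3)[symmetric] using S w w1 by (intro sum_sq_cos_mixture_toeplitz_ge) auto
  also have "\<dots> \<le> (\<Sum>a<N. M 0 ^ 2 + 2 * (\<Sum>k\<in>{1..<N}. M (real k) ^ 2))"
    by (intro sum_mono sum_sq_even_toeplitz_row_le) (auto simp: M_def)
  also have "\<dots> = real N * (1 + 2 * Z)"
  proof -
    have "{1..<N} = {1..4*K-2}" unfolding N_def using S(4) by auto
    moreover have "M 0 = 1" unfolding M_def using w1 by simp
    ultimately show ?thesis by (simp add: M_nat Z_def)
  qed
  finally have "real N * (real N / (2 * real K)) \<le> real N * (1 + 2 * Z)"
    by (simp add: power2_eq_square)
  moreover have N: "real N = 4 * real K - 1" and "real K \<ge> 1"
    unfolding N_def using S(4) by (simp_all add: of_nat_diff)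
  moreover have "real N > 0" using N \<open>real K \<ge> 1\<close> by linarith
  ultimately have "real N / (2 * real K) \<le> 1 + 2 * Z"
    using mult_le_cancel_left_pos by blast
  moreover have "real N / (2 * real K) \<ge> 3/2"
    unfolding N using \<open>real K \<ge> 1\<close> by (simp add: field_simps)
  ultimately show ?thesis unfolding Z_def by linarith
qed

section \<open>Counting mass points\<close>

lemma chi2_ge_chebyshev_eigenvalue:
  assumes "discrete_input S w K" "K \<ge> 1"
  shows "chebyshev_eigenvalue n (4 * K - 2) / 2 \<le> chi2 n (binom_out n S w) (ref_out n)"
proof -
  define D where "D = 4 * K - 2"
  define m where "m k = (\<Sum>x\<in>S. w x * shifted_chebyshev k x)" for k
  have S: "finite S" "S \<subseteq> {0..1}" "card S = K" and w: "\<And>x. x \<in> S \<Longrightarrow> w x \<ge> 0"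
    and w1: "(\<Sum>x\<in>S. w x) = 1"
    using assms(1) unfolding discrete_input_def by (auto simp: less_imp_le)
  have "chebyshev_eigenvalue n D * (1/4) \<le> chebyshev_eigenvalue n D * (\<Sum>k\<in>{1..D}. m k ^ 2)"
    using sum_sq_chebyshev_moments_ge[OF S assms(2) w w1] unfolding m_def D_def
    by (intro mult_left_mono chebyshev_eigenvalue_nonneg)
  also have "\<dots> \<le> (\<Sum>k\<in>{1..D}. chebyshev_eigenvalue n k * m k ^ 2)"
    unfolding sum_distrib_left by (intro sum_mono mult_right_mono chebyshev_eigenvalue_antimono) auto
  finally have "chebyshev_eigenvalue n D / 2 \<le> 2 * (\<Sum>k\<in>{1..D}. chebyshev_eigenvalue n k * m k ^ 2)"
    by simp
  also have "\<dots> \<le> chi2 n (binom_out n S w) (ref_out n)"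
    unfolding m_def by (rule chi2_ge_chebyshev_moments[OF S(1,2)])
  finally show ?thesis unfolding D_def .
qed

lemma ln_inverse_le_of_exp_le:
  fixes u E :: real
  assumes "0 < u" "exp (- E) / 2 \<le> u"
  shows "ln (1 / (4 * u)) \<le> E"
proof -
  have "ln (1 / (4 * u)) \<le> ln (1 / (2 * exp (- E)))"
    using assms by (subst ln_le_cancel_iff) (auto simp: field_simps)
  also have "\<dots> = E - ln 2"
    by (simp add: ln_div ln_mult)
  finally show ?thesis using ln_ge_zero[of 2] by linarith
qed

definition mass_point_bound :: "real \<Rightarrow> real \<Rightarrow> real \<Rightarrow> bool" where
  "mass_point_bound n \<alpha> k \<longleftrightarrow> k > (n + 2) / 4 \<or> k \<ge> (4 - \<alpha> + sqrt (\<alpha> * (4 * n + \<alpha> + 4))) / 8"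

lemma mass_point_bound_of_mult_le_sq:
  fixes n k \<alpha> :: real
  assumes "k \<ge> 1" "\<alpha> > 0" "\<alpha> * (n - 4 * k + 3) \<le> (4 * k - 2) ^ 2"
  shows "mass_point_bound n \<alpha> k"
proof -
  have "\<alpha> * (4 * n + \<alpha> + 4) \<le> (8 * k - 4 + \<alpha>) ^ 2"
    using assms(3) by (simp add: power2_eq_square algebra_simps)
  then have "sqrt (\<alpha> * (4 * n + \<alpha> + 4)) \<le> 8 * k - 4 + \<alpha>"
    using assms(1,2) by (intro real_le_lsqrt) auto
  then show ?thesis unfolding mass_point_bound_def by simp
qed

lemma mass_point_bound_of_chi2_le:
  assumes "discrete_input S w K" "K \<ge> 1" "0 < u" "u < 1/4"
    and "chi2 n (binom_out n S w) (ref_out n) \<le> u"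
  shows "mass_point_bound (real n) (ln (1 / (4 * u))) (real K)"
proof (cases "real K > (real n + 2) / 4")
  case True
  then show ?thesis unfolding mass_point_bound_def by simp
next
  case False
  define D where "D = 4 * K - 2"
  have "D \<le> n" "real D = 4 * real K - 2"
    using False assms(2) unfolding D_def by (simp_all add: of_nat_diff)
  have "exp (- (real D ^ 2 / (real n - real D + 1))) / 2 \<le> u"
    using chebyshev_eigenvalue_ge_exp[OF \<open>D \<le> n\<close>] chi2_ge_chebyshev_eigenvalue[OF assms(1,2), of n] assms(5)
    unfolding D_def by simp
  then have "ln (1 / (4 * u)) \<le> real D ^ 2 / (real n - real D + 1)"
    using assms(3) by (rule ln_inverse_le_of_exp_le[rotated])
  then have "ln (1 / (4 * u)) * (real n - 4 * real K + 3) \<le> (4 * real K - 2) ^ 2"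
    using \<open>D \<le> n\<close> \<open>real D = _\<close> by (simp add: field_simps)
  then show ?thesis
    using assms(2-4) by (intro mass_point_bound_of_mult_le_sq) auto
qed

lemma sqrt_mass_point_discriminant_ge:
  fixes n \<alpha> :: real
  assumes "\<alpha> > 0"
  shows "2 * sqrt (n * \<alpha>) \<le> sqrt (\<alpha> * (4 * n + \<alpha> + 4))"
proof -
  have "2 * sqrt (n * \<alpha>) = sqrt (4 * (n * \<alpha>))"
    by (simp add: real_sqrt_mult)
  also have "\<dots> \<le> sqrt (\<alpha> * (4 * n + \<alpha> + 4))"
    using assms by (intro real_sqrt_le_mono) (simp add: algebra_simps)
  finally show ?thesis .
qed

lemma mass_point_bound_imp_ge_min:
  fixes n \<alpha> k :: real
  assumes "n \<ge> 1" "\<alpha> > 0" "mass_point_bound n \<alpha> k"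
  shows "k \<ge> sqrt n * min (sqrt n) (sqrt \<alpha>) / 8"
proof -
  have "sqrt n * min (sqrt n) (sqrt \<alpha>) \<le> sqrt n * sqrt n"
    using assms(1) by (intro mult_left_mono) auto
  moreover have "sqrt n * min (sqrt n) (sqrt \<alpha>) \<le> sqrt n * sqrt \<alpha>"
    using assms(1) by (intro mult_left_mono) auto
  ultimately have min_le: "sqrt n * min (sqrt n) (sqrt \<alpha>) \<le> n" "sqrt n * min (sqrt n) (sqrt \<alpha>) \<le> sqrt n * sqrt \<alpha>"
    using assms(1) by simp_all
  show ?thesis
  proof (cases "k > (n + 2) / 4")
    case True
    then show ?thesis using min_le assms(1) by argo
  next
    case False
    then have k: "k \<ge> (4 - \<alpha> + sqrt (\<alpha> * (4 * n + \<alpha> + 4))) / 8"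
      using assms(3) unfolding mass_point_bound_def by simp
    show ?thesis
    proof (cases "\<alpha> \<ge> n")
      case True
      have "n * n \<le> \<alpha> * n" "0 \<le> \<alpha> * n"
        using True assms(1,2) by (auto intro: mult_right_mono)
      moreover have "(\<alpha> + n) ^ 2 = \<alpha> * \<alpha> + 2 * (\<alpha> * n) + n * n"
        and "\<alpha> * (4 * n + \<alpha> + 4) = 4 * (\<alpha> * n) + \<alpha> * \<alpha> + 4 * \<alpha>"
        by (simp_all add: power2_eq_square algebra_simps)
      ultimately have "(\<alpha> + n) ^ 2 \<le> \<alpha> * (4 * n + \<alpha> + 4)"
        using assms(2) by linarith
      then have "\<alpha> + n \<le> sqrt (\<alpha> * (4 * n + \<alpha> + 4))"
        by (rule real_le_rsqrt)
      then show ?thesis using k min_le by argo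
    next
      case False
      have "2 * (sqrt n * sqrt \<alpha>) \<le> sqrt (\<alpha> * (4 * n + \<alpha> + 4))"
        using sqrt_mass_point_discriminant_ge[OF assms(2), of n] by (simp add: real_sqrt_mult)
      moreover have "\<alpha> \<le> sqrt n * sqrt \<alpha>"
        using False assms(2) by (simp flip: real_sqrt_mult) (intro real_le_rsqrt, simp add: power2_eq_square)
      ultimately show ?thesis using k min_le by argo
    qed
  qed
qed

lemma mass_point_bound_imp_ge:
  fixes n \<alpha> k :: real
  assumes "\<alpha> > 0" "\<alpha> \<le> n" "mass_point_bound n \<alpha> k"
  shows "k \<ge> sqrt (n * \<alpha>) / 4 - \<alpha> / 8"
proof (cases "k > (n + 2) / 4")
  case True
  have "sqrt (n * \<alpha>) \<le> sqrt (n * n)"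
    using assms by (intro real_sqrt_le_mono mult_left_mono) auto
  then show ?thesis using True assms by simp
next
  case False
  then have "k \<ge> (4 - \<alpha> + sqrt (\<alpha> * (4 * n + \<alpha> + 4))) / 8"
    using assms(3) unfolding mass_point_bound_def by simp
  then show ?thesis using sqrt_mass_point_discriminant_ge[OF assms(1), of n] by argo
qed

lemma mass_point_bound_over_sqrt_tendsto:
  assumes bound: "\<And>n. n \<ge> 1 \<Longrightarrow> \<alpha> n > 0 \<and> mass_point_bound (real n) (\<alpha> n) (k n)"
    and \<alpha>: "filterlim \<alpha> at_top sequentially"
  shows "filterlim (\<lambda>n. k n / sqrt (real n)) at_top sequentially"
  unfolding filterlim_at_top
proof
  fix Z :: real
  have "\<forall>\<^sub>F n in sequentially. max 1 ((8 * Z) ^ 2) \<le> real n \<and> (8 * Z) ^ 2 \<le> \<alpha> n"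
    using \<alpha> filterlim_real_sequentially unfolding filterlim_at_top by (intro eventually_conj) blast+
  then show "\<forall>\<^sub>F n in sequentially. Z \<le> k n / sqrt (real n)"
  proof (rule eventually_mono)
    fix n assume n: "max 1 ((8 * Z) ^ 2) \<le> real n \<and> (8 * Z) ^ 2 \<le> \<alpha> n"
    then have "n \<ge> 1" by simp
    have "sqrt (real n) * min (sqrt (real n)) (sqrt (\<alpha> n)) / 8 \<le> k n"
      using bound[OF \<open>n \<ge> 1\<close>] n by (intro mass_point_bound_imp_ge_min) auto
    then have "min (sqrt (real n)) (sqrt (\<alpha> n)) / 8 \<le> k n / sqrt (real n)"
      using \<open>n \<ge> 1\<close> by (simp add: field_simps)
    moreover have "8 * Z \<le> sqrt (real n)" "8 * Z \<le> sqrt (\<alpha> n)"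
      using n by (auto intro: real_le_rsqrt)
    ultimately show "Z \<le> k n / sqrt (real n)"
      by argo
  qed
qed

lemma mass_point_bound_asymptotic:
  assumes bound: "\<And>n. n \<ge> 1 \<Longrightarrow> \<alpha> n > 0 \<and> mass_point_bound (real n) (\<alpha> n) (k n)"
    and small: "\<alpha> \<in> o(\<lambda>n. real n)"
  shows "\<exists>e. e \<longlonglongrightarrow> 0 \<and> (\<forall>\<^sub>F n in sequentially. k n \<ge> 1/4 * sqrt (real n * \<alpha> n) * (1 + e n))"
proof (intro exI conjI)
  have ratio: "(\<lambda>n. \<alpha> n / real n) \<longlonglongrightarrow> 0"
    using smalloD_tendsto[OF small] .
  show "(\<lambda>n. - sqrt (\<alpha> n / real n) / 2) \<longlonglongrightarrow> 0"
    using tendsto_divide[OF tendsto_minus[OF tendsto_real_sqrt[OF ratio]] tendsto_const[of 2]] by simp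
  have "\<forall>\<^sub>F n in sequentially. \<alpha> n / real n < 1 \<and> n \<ge> 1"
    using order_tendstoD(2)[OF ratio] eventually_ge_at_top[of 1] by (intro eventually_conj) simp_all
  then show "\<forall>\<^sub>F n in sequentially. k n \<ge> 1/4 * sqrt (real n * \<alpha> n) * (1 + - sqrt (\<alpha> n / real n) / 2)"
  proof (rule eventually_mono)
    fix n assume n: "\<alpha> n / real n < 1 \<and> n \<ge> 1"
    then have "\<alpha> n > 0" "\<alpha> n \<le> real n"
      using bound by (auto simp: field_simps)
    then have "k n \<ge> sqrt (real n * \<alpha> n) / 4 - \<alpha> n / 8"
      using bound n by (intro mass_point_bound_imp_ge) auto
    moreover have "sqrt (real n * \<alpha> n) * sqrt (\<alpha> n / real n) = \<alpha> n"
      using \<open>\<alpha> n > 0\<close> n by (simp flip: real_sqrt_mult)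
    ultimately show "k n \<ge> 1/4 * sqrt (real n * \<alpha> n) * (1 + - sqrt (\<alpha> n / real n) / 2)"
      by (simp add: algebra_simps)
  qed
qed

theorem proposition4:
  shows
  "(\<forall>(n::nat) (S::real set) (w::real \<Rightarrow> real) (K::nat) (u::real).
      n \<ge> 1 \<longrightarrow> K \<ge> 1 \<longrightarrow> discrete_input S w K \<longrightarrow> 0 < u \<longrightarrow> u < 1/4 \<longrightarrow>
      chi2 n (binom_out n S w) (ref_out n) \<le> u \<longrightarrow>
      (let \<alpha> = ln (1 / (4 * u)) in
         real K > (real n + 2) / 4 \<or>
         real K \<ge> (4 - \<alpha> + sqrt (\<alpha> * (4 * real n + \<alpha> + 4))) / 8))
   \<and>
   (\<forall>(S::nat \<Rightarrow> real set) (w::nat \<Rightarrow> real \<Rightarrow> real) (K::nat \<Rightarrow> nat) (u::nat \<Rightarrow> real).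
      (\<forall>n\<ge>1. K n \<ge> 1 \<and> discrete_input (S n) (w n) (K n) \<and> 0 < u n \<and> u n < 1/4 \<and>
              chi2 n (binom_out n (S n) (w n)) (ref_out n) \<le> u n) \<longrightarrow>
      filterlim (\<lambda>n. ln (1 / (4 * u n))) at_top sequentially \<longrightarrow>
      filterlim (\<lambda>n. real (K n) / sqrt (real n)) at_top sequentially \<and>
      ((\<lambda>n. ln (1 / (4 * u n))) \<in> o(\<lambda>n. real n) \<longrightarrow>
        (\<exists>e::nat \<Rightarrow> real. e \<longlonglongrightarrow> 0 \<and>
           (\<forall>\<^sub>F n in sequentially.
              real (K n) \<ge> 1/4 * sqrt (real n * ln (1 / (4 * u n))) * (1 + e n)))))"
proof (intro conjI allI impI)
  fix n :: nat and S :: "real set" and w :: "real \<Rightarrow> real" and K :: nat and u :: real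
  assume "n \<ge> 1" "K \<ge> 1" "discrete_input S w K" "0 < u" "u < 1/4"
    and "chi2 n (binom_out n S w) (ref_out n) \<le> u"
  then show "let \<alpha> = ln (1 / (4 * u)) in
      real K > (real n + 2) / 4 \<or> real K \<ge> (4 - \<alpha> + sqrt (\<alpha> * (4 * real n + \<alpha> + 4))) / 8"
    unfolding Let_def mass_point_bound_def[symmetric] by (intro mass_point_bound_of_chi2_le)
next
  fix S :: "nat \<Rightarrow> real set" and w :: "nat \<Rightarrow> real \<Rightarrow> real" and K :: "nat \<Rightarrow> nat" and u :: "nat \<Rightarrow> real"
  assume H: "\<forall>n\<ge>1. K n \<ge> 1 \<and> discrete_input (S n) (w n) (K n) \<and> 0 < u n \<and> u n < 1/4 \<and>
      chi2 n (binom_out n (S n) (w n)) (ref_out n) \<le> u n"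
  have bound: "ln (1 / (4 * u n)) > 0 \<and> mass_point_bound (real n) (ln (1 / (4 * u n))) (real (K n))"
    if "n \<ge> 1" for n
    using H that mass_point_bound_of_chi2_le[of "S n" "w n" "K n" "u n" n]
    by (auto intro!: ln_gt_zero simp: field_simps)
  {
    assume "filterlim (\<lambda>n. ln (1 / (4 * u n))) at_top sequentially"
    with bound show "filterlim (\<lambda>n. real (K n) / sqrt (real n)) at_top sequentially"
      by (rule mass_point_bound_over_sqrt_tendsto)
  next
    assume "(\<lambda>n. ln (1 / (4 * u n))) \<in> o(\<lambda>n. real n)"
    with bound show "\<exists>e::nat \<Rightarrow> real. e \<longlonglongrightarrow> 0 \<and>
        (\<forall>\<^sub>F n in sequentially. real (K n) \<ge> 1/4 * sqrt (real n * ln (1 / (4 * u n))) * (1 + e n))"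
      by (rule mass_point_bound_asymptotic)
  }
qed

end
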